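(* Let $N=\{1,\dots,n\}$ be a set of agents, $m>0$ a capacity, $\tau\ge 0$ and $g\ge 0$ fees, and for each $i\in N$ let $V_i:\mathbb{R}_+\to\mathbb{R}$ be strictly concave and differentiable with $V_i'(0)=\infty$ and $C_i:\mathbb{R}_+\to\mathbb{R}$ convex, differentiable and Lipschitz continuous. Let $U_i(x_i;\mu)=V_i(x_i)-C_i(x_i)-(\tau+\mu)x_i-g\,\mathbf{1}\{x_i>0\}$, $BR_i(\mu)=\arg\max_{x_i\ge 0}U_i(x_i;\mu)$ and $S(\mu)=\sum_{i=1}^nBR_i(\mu)$. If each $U_i$ is strictly concave in $x_i$, then the contract-clearing equilibrium $(\mathbf{x}^\star,\mu^\star)$ is unique.
   Context: A contract-clearing equilibrium is a pair $(\mathbf{x}^\star,\mu^\star)$ with $\mathbf{x}^\star\in\mathbb{R}_+^n$ and $\mu^\star\ge 0$ such that $x_i^\star=BR_i(\mu^\star)$ for all $i\in N$ and $S(\mu^\star)=\sum_i x_i^\star=m$. $\tau$ is a per-unit transaction fee, $g$ a fixed execution fee charged when $x_i>0$, and $\mu$ a shadow price enforcing capacity. *)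

theory Defs
  imports "HOL-Analysis.Analysis"
begin

definition strict_concave_on :: "real set \<Rightarrow> (real \<Rightarrow> real) \<Rightarrow> bool" where
  "strict_concave_on S f \<longleftrightarrow> convex S \<and>
    (\<forall>x\<in>S. \<forall>y\<in>S. x \<noteq> y \<longrightarrow> (\<forall>t::real. 0 < t \<and> t < 1 \<longrightarrow>
        f ((1 - t) * x + t * y) > (1 - t) * f x + t * f y))"

definition payoff ::
  "(real \<Rightarrow> real) \<Rightarrow> (real \<Rightarrow> real) \<Rightarrow> real \<Rightarrow> real \<Rightarrow> real \<Rightarrow> real \<Rightarrow> real" where
  "payoff V C \<tau> g \<mu> x = V x - C x - (\<tau> + \<mu>) * x - g * of_bool (x > 0)"

definition is_best_response ::
  "(real \<Rightarrow> real) \<Rightarrow> (real \<Rightarrow> real) \<Rightarrow> real \<Rightarrow> real \<Rightarrow> real \<Rightarrow> real \<Rightarrow> bool" where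
  "is_best_response V C \<tau> g \<mu> x \<longleftrightarrow>
     x \<ge> 0 \<and> (\<forall>y\<ge>0. payoff V C \<tau> g \<mu> y \<le> payoff V C \<tau> g \<mu> x)"

definition contract_clearing_eq ::
  "nat \<Rightarrow> (nat \<Rightarrow> real \<Rightarrow> real) \<Rightarrow> (nat \<Rightarrow> real \<Rightarrow> real) \<Rightarrow> real \<Rightarrow> real \<Rightarrow> real
    \<Rightarrow> (nat \<Rightarrow> real) \<Rightarrow> real \<Rightarrow> bool" where
  "contract_clearing_eq n V C \<tau> g m x \<mu> \<longleftrightarrow>
     \<mu> \<ge> 0 \<and> (\<forall>i\<in>{1..n}. x i \<ge> 0 \<and> is_best_response (V i) (C i) \<tau> g \<mu> (x i))
     \<and> (\<Sum>i\<in>{1..n}. x i) = m"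

end

theory Submission
  imports Defs
begin

text \<open>Raising the shadow price can only lower a best response (revealed preference), so if
  two clearing prices differed, the allocations, which have the same total \<open>m\<close>, would
  coincide. Some agent then trades a positive amount, and its first-order condition
  \<open>V\<^sub>i'(x\<^sub>i) - C\<^sub>i'(x\<^sub>i) = \<tau> + \<mu>\<close> pins down \<open>\<mu>\<close>. With the price fixed, strict concavity of
  \<open>U\<^sub>i\<close> makes each best response unique. Only differentiability of \<open>V\<^sub>i\<close> and \<open>C\<^sub>i\<close>, strict
  concavity of \<open>U\<^sub>i\<close> and \<open>m > 0\<close> are needed.\<close>

lemma best_response_antimono:
  assumes "is_best_response V C \<tau> g \<mu>1 x1" and "is_best_response V C \<tau> g \<mu>2 x2"
    and "\<mu>1 < \<mu>2"
  shows "x2 \<le> x1"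
proof -
  have "payoff V C \<tau> g \<mu>2 x1 \<le> payoff V C \<tau> g \<mu>2 x2"
    and "payoff V C \<tau> g \<mu>1 x2 \<le> payoff V C \<tau> g \<mu>1 x1"
    using assms unfolding is_best_response_def by auto
  then have "0 \<le> (\<mu>2 - \<mu>1) * (x1 - x2)"
    unfolding payoff_def by (simp add: algebra_simps)
  with \<open>\<mu>1 < \<mu>2\<close> show ?thesis
    by (simp add: zero_le_mult_iff)
qed

lemma best_response_first_order_condition:
  assumes "0 < x" and br: "is_best_response V C \<tau> g \<mu> x"
    and "(V has_real_derivative dv) (at x)" and "(C has_real_derivative dc) (at x)"
  shows "dv - dc = \<tau> + \<mu>"
proof -
  \<comment> \<open>near \<open>x > 0\<close> the fixed fee is always paid, so the payoff is smooth there\<close>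
  let ?k = "\<lambda>y. V y - C y - (\<tau> + \<mu>) * y - g"
  have deriv: "(?k has_real_derivative dv - dc - (\<tau> + \<mu>)) (at x)"
    using assms by (auto intro!: derivative_eq_intros)
  have "\<forall>y. \<bar>x - y\<bar> < x \<longrightarrow> ?k y \<le> ?k x"
  proof (intro allI impI)
    fix y
    assume "\<bar>x - y\<bar> < x"
    then have "0 < y" by linarith
    with br have "payoff V C \<tau> g \<mu> y \<le> payoff V C \<tau> g \<mu> x"
      unfolding is_best_response_def by auto
    with \<open>0 < y\<close> \<open>0 < x\<close> show "?k y \<le> ?k x"
      by (simp add: payoff_def)
  qed
  from DERIV_local_max[OF deriv \<open>0 < x\<close> this] show ?thesis
    by simp
qed

lemma best_response_positive_determines_price:
  assumes "0 < x" and "V differentiable (at x)" and "C differentiable (at x within {0..})"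
    and "is_best_response V C \<tau> g \<mu>1 x" and "is_best_response V C \<tau> g \<mu>2 x"
  shows "\<mu>1 = \<mu>2"
proof -
  obtain dv where dv: "(V has_real_derivative dv) (at x)"
    using assms(2) real_differentiable_def by blast
  obtain dc where "(C has_real_derivative dc) (at x within {0..})"
    using assms(3) real_differentiable_def by blast
  moreover have "at x within {0..} = at x"
    using \<open>0 < x\<close> by (intro at_within_interior) auto
  ultimately have dc: "(C has_real_derivative dc) (at x)"
    by simp
  have "dv - dc = \<tau> + \<mu>1" and "dv - dc = \<tau> + \<mu>2"
    using best_response_first_order_condition[OF \<open>0 < x\<close> _ dv dc] assms(4,5) by blast+
  then show ?thesis
    by simp
qed

lemma strict_concave_on_maximizer_unique:
  assumes "strict_concave_on S f" and "x \<in> S" and "y \<in> S"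
    and "\<forall>z\<in>S. f z \<le> f x" and "\<forall>z\<in>S. f z \<le> f y"
  shows "x = y"
proof (rule ccontr)
  assume "x \<noteq> y"
  let ?z = "(1 - 1/2) * x + 1/2 * y"
  have "?z \<in> S"
    using assms(1-3) convexD_alt[of S x y "1/2"] unfolding strict_concave_on_def by simp
  have "\<forall>t. 0 < t \<and> t < 1 \<longrightarrow> f ((1 - t) * x + t * y) > (1 - t) * f x + t * f y"
    using assms(1-3) \<open>x \<noteq> y\<close> unfolding strict_concave_on_def by blast
  from this[THEN spec, of "1/2"] have "f ?z > (1 - 1/2) * f x + 1/2 * f y"
    by simp
  moreover have "f ?z \<le> f x"
    using assms(4) \<open>?z \<in> S\<close> by blast
  moreover have "f y = f x"
    using assms(2-5) by (simp add: order_antisym)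
  ultimately show False
    by (simp add: field_simps)
qed

lemma best_response_unique:
  assumes "strict_concave_on {0..} (payoff V C \<tau> g \<mu>)"
    and "is_best_response V C \<tau> g \<mu> x" and "is_best_response V C \<tau> g \<mu> y"
  shows "x = y"
  using assms strict_concave_on_maximizer_unique[of "{0..}" "payoff V C \<tau> g \<mu>" x y]
  unfolding is_best_response_def by auto

lemma contract_clearing_eq_allocations_eq_if_price_less:
  assumes "contract_clearing_eq n V C \<tau> g m x1 \<mu>1" and "contract_clearing_eq n V C \<tau> g m x2 \<mu>2"
    and "\<mu>1 < \<mu>2"
  shows "\<forall>i\<in>{1..n}. x1 i = x2 i"
proof -
  have le: "x2 i \<le> x1 i" if "i \<in> {1..n}" for i
    using assms that best_response_antimono unfolding contract_clearing_eq_def by blast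
  have "(\<Sum>i\<in>{1..n}. x2 i) = (\<Sum>i\<in>{1..n}. x1 i)"
    using assms unfolding contract_clearing_eq_def by simp
  from sum_mono_inv[OF this le] show ?thesis
    by simp
qed

lemma contract_clearing_eq_price_not_less:
  assumes "0 < m"
    and V_diff: "\<forall>i\<in>{1..n}. \<forall>x>0. V i differentiable (at x)"
    and C_diff: "\<forall>i\<in>{1..n}. \<forall>x\<ge>0. C i differentiable (at x within {0..})"
    and eq1: "contract_clearing_eq n V C \<tau> g m x1 \<mu>1"
    and eq2: "contract_clearing_eq n V C \<tau> g m x2 \<mu>2"
  shows "\<not> \<mu>1 < \<mu>2"
proof
  assume "\<mu>1 < \<mu>2"
  with eq1 eq2 have same: "\<forall>i\<in>{1..n}. x1 i = x2 i"
    by (rule contract_clearing_eq_allocations_eq_if_price_less)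
  have "\<exists>i\<in>{1..n}. 0 < x1 i"
  proof (rule ccontr)
    assume "\<not> ?thesis"
    with eq1 have "\<forall>i\<in>{1..n}. x1 i = 0"
      unfolding contract_clearing_eq_def by force
    with eq1 \<open>0 < m\<close> show False
      unfolding contract_clearing_eq_def by simp
  qed
  then obtain i where i: "i \<in> {1..n}" "0 < x1 i" by blast
  have "is_best_response (V i) (C i) \<tau> g \<mu>1 (x1 i)"
    and "is_best_response (V i) (C i) \<tau> g \<mu>2 (x1 i)"
    using eq1 eq2 same i(1) unfolding contract_clearing_eq_def by auto
  with i V_diff C_diff have "\<mu>1 = \<mu>2"
    by (intro best_response_positive_determines_price[of "x1 i" "V i" "C i"]) auto
  with \<open>\<mu>1 < \<mu>2\<close> show False by simp
qed

theorem theorem4p7: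
  fixes n :: nat and m \<tau> g :: real
    and V C :: "nat \<Rightarrow> real \<Rightarrow> real"
  assumes m_pos: "m > 0" and tau_nonneg: "\<tau> \<ge> 0" and g_nonneg: "g \<ge> 0"
    and V_sconc: "\<forall>i\<in>{1..n}. strict_concave_on {0..} (V i)"
    and V_diff: "\<forall>i\<in>{1..n}. \<forall>x>0. V i differentiable (at x)"
    and V_inf: "\<forall>i\<in>{1..n}.
        filterlim (\<lambda>h. (V i h - V i 0) / h) at_top (at_right 0)"
    and C_conv: "\<forall>i\<in>{1..n}. convex_on {0..} (C i)"
    and C_diff: "\<forall>i\<in>{1..n}. \<forall>x\<ge>0. C i differentiable (at x within {0..})"
    and C_lip: "\<forall>i\<in>{1..n}. \<exists>L. L-lipschitz_on {0..} (C i)"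
    and U_sconc: "\<forall>i\<in>{1..n}. \<forall>\<mu>\<ge>0.
        strict_concave_on {0..} (\<lambda>x. payoff (V i) (C i) \<tau> g \<mu> x)"
    and eq1: "contract_clearing_eq n V C \<tau> g m x1 \<mu>1"
    and eq2: "contract_clearing_eq n V C \<tau> g m x2 \<mu>2"
  shows "\<mu>1 = \<mu>2 \<and> (\<forall>i\<in>{1..n}. x1 i = x2 i)"
proof -
  have "\<not> \<mu>1 < \<mu>2" and "\<not> \<mu>2 < \<mu>1"
    using contract_clearing_eq_price_not_less[OF m_pos V_diff C_diff] eq1 eq2 by blast+
  then have price: "\<mu>1 = \<mu>2" by simp
  have "x1 i = x2 i" if i: "i \<in> {1..n}" for i
  proof (rule best_response_unique)
    show "strict_concave_on {0..} (payoff (V i) (C i) \<tau> g \<mu>1)"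
      using U_sconc i eq1 unfolding contract_clearing_eq_def by simp
    show "is_best_response (V i) (C i) \<tau> g \<mu>1 (x1 i)"
      and "is_best_response (V i) (C i) \<tau> g \<mu>1 (x2 i)"
      using eq1 eq2 price i unfolding contract_clearing_eq_def by auto
  qed
  with price show ?thesis by blast
qed

end
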